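(* Let $c\in\mathbb{R}^n$, and suppose $S(A,b)\neq\emptyset$. Let $e^*\in E$ be such that $\underline{X}(e^* )\in S(A,b)$ and $\underline{X}(e^* )$ minimizes $Z_1(x)=\sum_{j\in J}c^+_jx_j$ over $S(A,b)$, where $c^+_j=\max\{c_j,0\}$. Define $x^*\in[0,1]^n$ by $x^*_j=\bar X_j$ if $c_j<0$ and $x^*_j=\underline{X}(e^* )_j$ if $c_j\ge0$. Then $\sum_{j\in J}c_jx^*_j\le\sum_{j\in J}c_jx_j$ for every $x\in S(A,b)$.
   Context: Let $\lambda>0$. The Aczel–Alsina t-norm is $T^{\lambda}_{AA}:[0,1]^2\to[0,1]$, $T^{\lambda}_{AA}(a,x)=0$ if $a=0$ or $x=0$, and $T^{\lambda}_{AA}(a,x)=\exp\!\left(-\left[(-\ln a)^{\lambda}+(-\ln x)^{\lambda}\right]^{1/\lambda}\right)$ otherwise. Let $I=\{1,\dots,m\}$, $J=\{1,\dots,n\}$, $A=(a_{ij})$ with $a_{ij}\in[0,1]$, and $b=(b_i)_{i\in I}$ with $b_i\in[0,1]$. $S(A,b)=\{x\in[0,1]^n: \max_{j\in J} T^{\lambda}_{AA}(a_{ij},x_j)=b_i \text{ for all } i\in I\}$. For each $i\in I$, $J_i=\{j\in J: a_{ij}\ge b_i\}$. For $i\in I$ define $\hat x_i\in[0,1]^n$ by: for $k\in J_i$ with $b_i\neq 0$, $(\hat x_i)_k=\exp\!\left(-\left[(-\ln b_i)^{\lambda}-(-\ln a_{ik})^{\lambda}\right]^{1/\lambda}\right)$;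 for $k\in J_i$ with $a_{ik}>b_i=0$, $(\hat x_i)_k=0$; for $k\in J_i$ with $a_{ik}=b_i=0$, $(\hat x_i)_k=1$; for $k\notin J_i$, $(\hat x_i)_k=1$. Let $\bar X\in[0,1]^n$ be the componentwise minimum $\bar X_k=\min_{i\in I}(\hat x_i)_k$. For $i\in I$ and $j\in J_i$ define $\check x_i(j)\in[0,1]^n$ by $\check x_i(j)_k=\exp\!\left(-\left[(-\ln b_i)^{\lambda}-(-\ln a_{ij})^{\lambda}\right]^{1/\lambda}\right)$ if $b_i\neq0$ and $k=j$, and $\check x_i(j)_k=0$ otherwise. Let $E$ be the set of all maps $e:I\to J$ with $e(i)\in J_i$ for every $i\in I$. For $e\in E$ define $\underline{X}(e)\in[0,1]^n$ by $\underline{X}(e)_k=\max_{i\in I}\check x_i(e(i))_k$ for $k\in J$. *)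

theory Defs
  imports "HOL-Analysis.Analysis"
begin

definition T_AA :: "real \<Rightarrow> real \<Rightarrow> real \<Rightarrow> real" where
  "T_AA lam a x = (if a = 0 \<or> x = 0 then 0
     else exp (- (((- ln a) powr lam + (- ln x) powr lam) powr (1/lam))))"

text \<open>Index sets I = {1..m}, J = {1..n}; matrices/vectors are functions on nat.\<close>
definition Sol :: "real \<Rightarrow> nat \<Rightarrow> nat \<Rightarrow> (nat \<Rightarrow> nat \<Rightarrow> real) \<Rightarrow> (nat \<Rightarrow> real) \<Rightarrow> (nat \<Rightarrow> real) set" where
  "Sol lam m n A b = {x. (\<forall>j\<in>{1..n}. 0 \<le> x j \<and> x j \<le> 1) \<and>
      (\<forall>i\<in>{1..m}. Max ((\<lambda>j. T_AA lam (A i j) (x j)) ` {1..n}) = b i)}"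

definition Jset :: "nat \<Rightarrow> (nat \<Rightarrow> nat \<Rightarrow> real) \<Rightarrow> (nat \<Rightarrow> real) \<Rightarrow> nat \<Rightarrow> nat set" where
  "Jset n A b i = {j\<in>{1..n}. A i j \<ge> b i}"

definition phi :: "real \<Rightarrow> real \<Rightarrow> real \<Rightarrow> real" where
  "phi lam a bi = exp (- (((- ln bi) powr lam - (- ln a) powr lam) powr (1/lam)))"

definition xhat :: "real \<Rightarrow> nat \<Rightarrow> (nat \<Rightarrow> nat \<Rightarrow> real) \<Rightarrow> (nat \<Rightarrow> real) \<Rightarrow> nat \<Rightarrow> nat \<Rightarrow> real" where
  "xhat lam n A b i k =
     (if k \<in> Jset n A b i then
        (if b i \<noteq> 0 then phi lam (A i k) (b i)
         else if A i k > b i then 0 else 1)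
      else 1)"

definition Xbar :: "real \<Rightarrow> nat \<Rightarrow> nat \<Rightarrow> (nat \<Rightarrow> nat \<Rightarrow> real) \<Rightarrow> (nat \<Rightarrow> real) \<Rightarrow> nat \<Rightarrow> real" where
  "Xbar lam m n A b k = Min ((\<lambda>i. xhat lam n A b i k) ` {1..m})"

definition xcheck :: "real \<Rightarrow> (nat \<Rightarrow> nat \<Rightarrow> real) \<Rightarrow> (nat \<Rightarrow> real) \<Rightarrow> nat \<Rightarrow> nat \<Rightarrow> nat \<Rightarrow> real" where
  "xcheck lam A b i j k = (if b i \<noteq> 0 \<and> k = j then phi lam (A i j) (b i) else 0)"

definition Eset :: "nat \<Rightarrow> nat \<Rightarrow> (nat \<Rightarrow> nat \<Rightarrow> real) \<Rightarrow> (nat \<Rightarrow> real) \<Rightarrow> (nat \<Rightarrow> nat) set" where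
  "Eset m n A b = {e. \<forall>i\<in>{1..m}. e i \<in> Jset n A b i}"

definition Xlow :: "real \<Rightarrow> nat \<Rightarrow> (nat \<Rightarrow> nat \<Rightarrow> real) \<Rightarrow> (nat \<Rightarrow> real) \<Rightarrow> (nat \<Rightarrow> nat) \<Rightarrow> nat \<Rightarrow> real" where
  "Xlow lam m A b e k = Max ((\<lambda>i. xcheck lam A b i (e i) k) ` {1..m})"

end

theory Submission
  imports Defs
begin

text \<open>Every solution lies below the maximal point \<open>Xbar\<close>: if \<open>T(a,x) \<le> b\<close> then
  \<open>x\<close> is at most the residuum \<open>phi a b\<close> of the Aczel-Alsina t-norm. Split the objective as
  \<open>c = c\<^sup>+ + c\<^sup>-\<close>. On the \<open>c\<^sup>+\<close> part \<open>x*\<close> agrees with \<open>Xlow(e*)\<close>, which minimizes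
  \<open>Z\<^sub>1\<close>; on the \<open>c\<^sup>-\<close> part it agrees with \<open>Xbar\<close>, the largest possible value of each
  component. Both parts are thus minimized independently, and so is their sum. Only the
  minimality of \<open>Xlow(e*)\<close> is used, not that it (or \<open>x*\<close>) is a solution.\<close>

lemma le_powr_inverse_iff:
  fixes s t lam :: real
  assumes "lam > 0" "s \<ge> 0" "t \<ge> 0"
  shows "s \<le> t powr (1/lam) \<longleftrightarrow> s powr lam \<le> t"
proof -
  have "s \<le> t powr (1/lam) \<longleftrightarrow> s powr lam \<le> (t powr (1/lam)) powr lam"
    using assms powr_less_mono2[of lam "t powr (1/lam)" s]
    by (auto intro: powr_mono2 simp: not_le[symmetric])
  also have "(t powr (1/lam)) powr lam = t"
    using assms by (cases "t = 0") (auto simp: powr_powr)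
  finally show ?thesis .
qed

lemma T_AA_le_imp_le_phi:
  fixes lam a x b :: real
  assumes lam: "lam > 0" and b: "0 < b" "b \<le> a" and a: "a \<le> 1" and x: "0 \<le> x" "x \<le> 1"
    and T: "T_AA lam a x \<le> b"
  shows "x \<le> phi lam a b"
proof (cases "x = 0")
  case True
  then show ?thesis by (simp add: phi_def)
next
  case False
  define u v w where "u = - ln a" and "v = - ln x" and "w = - ln b"
  have "0 \<le> u" "u \<le> w" "0 \<le> v" "exp (- v) = x"
    using a b x False by (auto simp: u_def v_def w_def)
  have "- ((u powr lam + v powr lam) powr (1/lam)) \<le> ln b"
    using T b False \<open>b \<le> a\<close> unfolding T_AA_def u_def v_def
    by (simp add: ln_ge_iff)
  then have "w powr lam \<le> u powr lam + v powr lam"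
    using le_powr_inverse_iff[OF lam, of w "u powr lam + v powr lam"] \<open>0 \<le> u\<close> \<open>u \<le> w\<close>
    by (simp add: w_def)
  moreover have "u powr lam \<le> w powr lam"
    using powr_mono2[of lam u w] lam \<open>0 \<le> u\<close> \<open>u \<le> w\<close> by simp
  ultimately have "(w powr lam - u powr lam) powr (1/lam) \<le> v"
    using le_powr_inverse_iff[of "1/lam" "w powr lam - u powr lam" v] lam \<open>0 \<le> v\<close>
    by simp
  then have "exp (- v) \<le> exp (- ((w powr lam - u powr lam) powr (1/lam)))"
    by simp
  then show ?thesis
    using \<open>exp (- v) = x\<close> by (simp add: phi_def u_def w_def)
qed

lemma Sol_le_xhat:
  assumes lam: "lam > 0" and x: "x \<in> Sol lam m n A b"
    and i: "i \<in> {1..m}" and k: "k \<in> {1..n}"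
    and A: "0 \<le> A i k" "A i k \<le> 1" and b: "0 \<le> b i"
  shows "x k \<le> xhat lam n A b i k"
proof -
  have xk: "0 \<le> x k" "x k \<le> 1"
    using x k by (auto simp: Sol_def)
  have "T_AA lam (A i k) (x k) \<le> Max ((\<lambda>j. T_AA lam (A i j) (x j)) ` {1..n})"
    using k by (intro Max_ge) auto
  also have "\<dots> = b i"
    using x i by (auto simp: Sol_def)
  finally have T: "T_AA lam (A i k) (x k) \<le> b i" .
  show ?thesis
  proof (cases "k \<in> Jset n A b i")
    case False
    then show ?thesis using xk by (simp add: xhat_def)
  next
    case True
    then have "b i \<le> A i k" by (simp add: Jset_def)
    consider "b i = 0" "A i k > 0" | "b i = 0" "A i k = 0" | "b i > 0"
      using b A \<open>b i \<le> A i k\<close> by fastforce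
    then show ?thesis
    proof cases
      case 1
      then have "x k = 0"
        using T by (auto simp: T_AA_def split: if_splits)
      then show ?thesis by (simp add: xhat_def phi_def)
    next
      case 2
      then show ?thesis using True xk by (simp add: xhat_def)
    next
      case 3
      then show ?thesis
        using True T_AA_le_imp_le_phi[OF lam 3 \<open>b i \<le> A i k\<close> A(2) xk T]
        by (simp add: xhat_def)
    qed
  qed
qed

lemma Sol_le_Xbar:
  assumes "lam > 0" and "m \<ge> 1"
    and A: "\<forall>i\<in>{1..m}. \<forall>j\<in>{1..n}. 0 \<le> A i j \<and> A i j \<le> 1"
    and b: "\<forall>i\<in>{1..m}. 0 \<le> b i"
    and "x \<in> Sol lam m n A b" and "k \<in> {1..n}"
  shows "x k \<le> Xbar lam m n A b k"
  unfolding Xbar_def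
  using assms by (intro Min.boundedI) (auto intro!: Sol_le_xhat)

lemma sum_le_sum_by_coefficient_sign:
  fixes c u v x :: "'a \<Rightarrow> real"
  assumes pos: "(\<Sum>j\<in>J. max (c j) 0 * u j) \<le> (\<Sum>j\<in>J. max (c j) 0 * x j)"
    and neg: "\<And>j. j \<in> J \<Longrightarrow> c j < 0 \<Longrightarrow> x j \<le> v j"
  shows "(\<Sum>j\<in>J. c j * (if c j < 0 then v j else u j)) \<le> (\<Sum>j\<in>J. c j * x j)"
proof -
  have "(\<Sum>j\<in>J. c j * (if c j < 0 then v j else u j))
      = (\<Sum>j\<in>J. max (c j) 0 * u j) + (\<Sum>j\<in>J. min (c j) 0 * v j)"
    by (auto simp: sum.distrib[symmetric] max_def min_def intro!: sum.cong)
  also have "\<dots> \<le> (\<Sum>j\<in>J. max (c j) 0 * x j) + (\<Sum>j\<in>J. min (c j) 0 * x j)"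
    using neg by (intro add_mono[OF pos] sum_mono)
      (fastforce simp: min_def not_less intro: mult_left_mono_neg)
  also have "\<dots> = (\<Sum>j\<in>J. c j * x j)"
    by (auto simp: sum.distrib[symmetric] max_def min_def intro!: sum.cong)
  finally show ?thesis .
qed

theorem theorem2:
  fixes lam :: real and m n :: nat and A :: "nat \<Rightarrow> nat \<Rightarrow> real" and b c :: "nat \<Rightarrow> real"
    and e :: "nat \<Rightarrow> nat" and xs :: "nat \<Rightarrow> real"
  assumes lam: "lam > 0" and m: "m \<ge> 1" and n: "n \<ge> 1"
    and A: "\<forall>i\<in>{1..m}. \<forall>j\<in>{1..n}. 0 \<le> A i j \<and> A i j \<le> 1"
    and b: "\<forall>i\<in>{1..m}. 0 \<le> b i \<and> b i \<le> 1"
    and nonempty: "Sol lam m n A b \<noteq> {}"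
    and e: "e \<in> Eset m n A b"
    and esol: "Xlow lam m A b e \<in> Sol lam m n A b"
    and emin: "\<forall>x\<in>Sol lam m n A b.
       (\<Sum>j\<in>{1..n}. max (c j) 0 * Xlow lam m A b e j) \<le> (\<Sum>j\<in>{1..n}. max (c j) 0 * x j)"
    and xs: "\<forall>j\<in>{1..n}. xs j = (if c j < 0 then Xbar lam m n A b j else Xlow lam m A b e j)"
  shows "\<forall>x\<in>Sol lam m n A b. (\<Sum>j\<in>{1..n}. c j * xs j) \<le> (\<Sum>j\<in>{1..n}. c j * x j)"
proof
  fix x assume x: "x \<in> Sol lam m n A b"
  have "(\<Sum>j\<in>{1..n}. c j * xs j)
      = (\<Sum>j\<in>{1..n}. c j * (if c j < 0 then Xbar lam m n A b j else Xlow lam m A b e j))"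
    using xs by (intro sum.cong) auto
  also have "\<dots> \<le> (\<Sum>j\<in>{1..n}. c j * x j)"
  proof (rule sum_le_sum_by_coefficient_sign)
    show "(\<Sum>j\<in>{1..n}. max (c j) 0 * Xlow lam m A b e j) \<le> (\<Sum>j\<in>{1..n}. max (c j) 0 * x j)"
      using emin x by blast
    show "x j \<le> Xbar lam m n A b j" if "j \<in> {1..n}" for j
      using Sol_le_Xbar[OF lam m A _ x that] b by blast
  qed
  finally show "(\<Sum>j\<in>{1..n}. c j * xs j) \<le> (\<Sum>j\<in>{1..n}. c j * x j)" .
qed

end
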